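(* Every statistically Cauchy sequence in an $S$-metric space $(X,S)$ is statistically bounded.
   Context: An $S$-metric on a nonempty set $X$ is a function $S:X^3\to[0,\infty)$ such that for all $x,y,z,a\in X$: $S(x,y,z)=0$ if and only if $x=y=z$, and $S(x,y,z)\le S(x,x,a)+S(y,y,a)+S(z,z,a)$. For $B\subset\mathbb N$ the natural density is $\delta(B)=\lim_{n\to\infty}\frac{|\{k\in B:k\le n\}|}{n}$ when the limit exists. A sequence $\{x_n\}$ is statistically Cauchy if for every $\varepsilon>0$ there exists $N\in\mathbb N$ with $\delta(\{n: S(x_n,x_n,x_N)\ge\varepsilon\})=0$. A sequence $\{x_n\}$ is statistically bounded if for any fixed $u\in X$ there exists a positive real number $B$ such that $\delta(\{n\in\mathbb N: S(x_n,x_n,u)\ge B\})=0$. *)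

theory Defs
  imports Complex_Main
begin

definition S_metric :: "('a \<Rightarrow> 'a \<Rightarrow> 'a \<Rightarrow> real) \<Rightarrow> bool" where
  "S_metric S \<longleftrightarrow>
     (\<forall>x y z. S x y z \<ge> 0) \<and>
     (\<forall>x y z. S x y z = 0 \<longleftrightarrow> x = y \<and> y = z) \<and>
     (\<forall>x y z a. S x y z \<le> S x x a + S y y a + S z z a)"

definition natural_density :: "nat set \<Rightarrow> real \<Rightarrow> bool" where
  "natural_density B d \<longleftrightarrow>
     (\<lambda>n. real (card {k \<in> B. 1 \<le> k \<and> k \<le> n}) / real n) \<longlonglongrightarrow> d"

definition stat_cauchy :: "('a \<Rightarrow> 'a \<Rightarrow> 'a \<Rightarrow> real) \<Rightarrow> (nat \<Rightarrow> 'a) \<Rightarrow> bool" where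
  "stat_cauchy S x \<longleftrightarrow>
     (\<forall>\<epsilon>>0. \<exists>N. natural_density {n. S (x n) (x n) (x N) \<ge> \<epsilon>} 0)"

definition stat_bounded :: "('a \<Rightarrow> 'a \<Rightarrow> 'a \<Rightarrow> real) \<Rightarrow> (nat \<Rightarrow> 'a) \<Rightarrow> bool" where
  "stat_bounded S x \<longleftrightarrow>
     (\<forall>u. \<exists>B>0. natural_density {n. S (x n) (x n) u \<ge> B} 0)"

end

(* Statistical Cauchyness with tolerance 1 puts almost all terms, in density, within
   S-distance 1 of a single term x N.  The S-metric triangle inequality with y = x moves
   this to any other centre u at the cost 2 + S u u (x N), which gives the bound. *)
theory Submission
  imports Defs
begin

lemma natural_density_zero_subset:
  assumes "A \<subseteq> B" and "natural_density B 0"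
  shows "natural_density A 0"
  unfolding natural_density_def
proof (rule tendsto_sandwich)
  let ?count = "\<lambda>C n. real (card {k \<in> C. 1 \<le> k \<and> k \<le> n}) / real n"
  have "card {k \<in> A. 1 \<le> k \<and> k \<le> n} \<le> card {k \<in> B. 1 \<le> k \<and> k \<le> n}" for n
    using assms(1) by (intro card_mono) (auto intro: finite_subset[of _ "{..n}"])
  then show "\<forall>\<^sub>F n in sequentially. ?count A n \<le> ?count B n"
    by (intro always_eventually allI divide_right_mono) simp_all
  show "\<forall>\<^sub>F n in sequentially. 0 \<le> ?count A n"
    by simp
  show "(\<lambda>n. 0) \<longlonglongrightarrow> (0::real)"
    by simp
  show "?count B \<longlonglongrightarrow> 0"
    using assms(2) unfolding natural_density_def .
qed

lemma S_metric_change_centre: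
  assumes "S_metric S"
  shows "S x x u \<le> 2 * S x x a + S u u a"
proof -
  have "S x x u \<le> S x x a + S x x a + S u u a"
    using assms unfolding S_metric_def by blast
  then show ?thesis
    by simp
qed

lemma stat_bounded_if_density_zero_outside_ball:
  assumes "S_metric S" and "r > 0"
    and "natural_density {n. S (x n) (x n) a \<ge> r} 0"
  shows "stat_bounded S x"
  unfolding stat_bounded_def
proof
  fix u
  define B where "B = 2 * r + S u u a"
  have "B > 0"
    using assms(1,2) unfolding B_def S_metric_def by (simp add: add_pos_nonneg)
  moreover have "{n. S (x n) (x n) u \<ge> B} \<subseteq> {n. S (x n) (x n) a \<ge> r}"
  proof
    fix n
    assume "n \<in> {n. S (x n) (x n) u \<ge> B}"
    then show "n \<in> {n. S (x n) (x n) a \<ge> r}"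
      using S_metric_change_centre[OF assms(1), of "x n" u a] unfolding B_def by simp
  qed
  ultimately show "\<exists>B>0. natural_density {n. S (x n) (x n) u \<ge> B} 0"
    using natural_density_zero_subset assms(3) by blast
qed

theorem theorem3p7:
  fixes S :: "'a \<Rightarrow> 'a \<Rightarrow> 'a \<Rightarrow> real" and x :: "nat \<Rightarrow> 'a"
  assumes "S_metric S" and "stat_cauchy S x"
  shows "stat_bounded S x"
proof -
  obtain N where "natural_density {n. S (x n) (x n) (x N) \<ge> 1} 0"
    using assms(2) unfolding stat_cauchy_def by (meson zero_less_one)
  then show ?thesis
    using stat_bounded_if_density_zero_outside_ball[OF assms(1) zero_less_one] by blast
qed

end
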